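(* Let $\alpha$ be any smooth section over $\mathcal D_e^-$ of $\mathrm{End}^1(E)$ with $[\alpha,\delta]=\alpha\delta+\delta\alpha=1$ ($\alpha$ need not square to zero). Then the 1-form $\kappa=\mathrm{Tr_s}[\alpha\,\mathbf d\delta]$ on $\mathcal D_e^-$ does not depend on the choice of $\alpha$, and it is closed. Moreover, for every smooth section $f$ of $T^*\mathcal D_e^-\widehat\otimes\mathrm{End}^0(E)$, $$\mathrm{Tr_s}\big[\alpha[f,\delta]\big]=\mathrm{Tr_s}[f] .$$
   Context: $E=\bigoplus_{i=p}^qE^i$ is a finite-dimensional complex $\mathbb Z$-graded vector space. $\mathrm{End}(E)$ is graded by degree and $\mathbb Z_2$-graded by parity, and $[A,B]=AB-(-1)^{\deg A\deg B}BA$ is the supercommutator. $\mathcal D_e^-$ is the (nonempty) manifold of exact differentials $\delta\in\mathrm{End}^{-1}(E)$ with $\delta^2=0$. $\mathbf d$ is the de Rham operator on $\mathcal D_e^-$, and $\delta$ is the tautological function. Products are in $\Lambda(T^*\mathcal D_e^-)\widehat\otimes\mathrm{End}(E)$ (graded tensor product, 1-forms odd). $\mathrm{Tr_s}[A]=\mathrm{Tr}[(-1)^NA]$, where $N$ is the number operator ($N=i$ on $E^i$), extended to $\Lambda(T^*\mathcal D_e^-)$-valued endomorphisms by $\mathrm{Tr_s}[\beta A]=\beta\,\mathrm{Tr_s}[A]$. *)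

theory Defs
  imports "HOL-Analysis.Analysis"
begin

text \<open>Model: E = complex^'n with a homogeneous basis; the basis vector e_i lies in E^(N i).
  End(E) = complex^'n^'n, viewed as a real Euclidean space (ambient space of the
  manifold of exact differentials).\<close>

type_synonym 'n endo = "complex^'n^'n"

definition hom_deg :: "('n::finite \<Rightarrow> int) \<Rightarrow> int \<Rightarrow> 'n endo \<Rightarrow> bool" where
  "hom_deg N k A = (\<forall>i j. A $ i $ j \<noteq> 0 \<longrightarrow> N i = N j + k)"

definition str :: "('n::finite \<Rightarrow> int) \<Rightarrow> 'n endo \<Rightarrow> complex" where
  "str N A = (\<Sum>i\<in>UNIV. (if even (N i) then 1 else -1) * A $ i $ i)"

definition exact_diffs :: "('n::finite \<Rightarrow> int) \<Rightarrow> 'n endo set" where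
  "exact_diffs N = {\<delta>. hom_deg N (-1) \<delta> \<and> \<delta> ** \<delta> = 0 \<and>
                        {x. \<delta> *v x = 0} = range (\<lambda>x. \<delta> *v x)}"

fun Ck :: "nat \<Rightarrow> 'a::euclidean_space set \<Rightarrow> ('a \<Rightarrow> 'b::real_normed_vector) \<Rightarrow> bool" where
  "Ck 0 U f = continuous_on U f"
| "Ck (Suc k) U f = (f differentiable_on U \<and> (\<forall>v. Ck k U (\<lambda>x. frechet_derivative f (at x) v)))"

definition Cinf_on :: "'a::euclidean_space set \<Rightarrow> ('a \<Rightarrow> 'b::real_normed_vector) \<Rightarrow> bool" where
  "Cinf_on U f = (open U \<and> (\<forall>k. Ck k U f))"

definition Cinf_on_set :: "'a::euclidean_space set \<Rightarrow> ('a \<Rightarrow> 'b::real_normed_vector) \<Rightarrow> bool" where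
  "Cinf_on_set S g = (\<forall>x\<in>S. \<exists>U h. open U \<and> x \<in> U \<and> Cinf_on U h \<and> (\<forall>y\<in>U \<inter> S. h y = g y))"

definition tangent_space :: "'a::euclidean_space set \<Rightarrow> 'a \<Rightarrow> 'a set" where
  "tangent_space S p = {v. \<exists>\<gamma>::real \<Rightarrow> 'a. Cinf_on UNIV \<gamma> \<and> (\<forall>t. \<gamma> t \<in> S) \<and> \<gamma> 0 = p \<and>
                          (\<gamma> has_derivative (\<lambda>t. t *\<^sub>R v)) (at 0)}"

text \<open>A (complex-valued) 1-form \<kappa> on S, given as \<kappa> p v for v tangent at p, is closed
  iff its pullback along every smooth map from an open subset of R^2 into S is closed,
  i.e. d(a dx + b dy) = (d_x b - d_y a) dx dy = 0.\<close>
definition closed_1form :: "'a::euclidean_space set \<Rightarrow> ('a \<Rightarrow> 'a \<Rightarrow> 'c::real_normed_vector) \<Rightarrow> bool" where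
  "closed_1form S \<kappa> = (\<forall>(U::(real\<times>real) set) \<phi>. open U \<and> Cinf_on U \<phi> \<and> \<phi> ` U \<subseteq> S \<longrightarrow>
      (\<forall>x\<in>U. \<exists>A B.
         ((\<lambda>y. \<kappa> (\<phi> y) (frechet_derivative \<phi> (at y) (1,0))) has_derivative A) (at x) \<and>
         ((\<lambda>y. \<kappa> (\<phi> y) (frechet_derivative \<phi> (at y) (0,1))) has_derivative B) (at x) \<and>
         B (1,0) = A (0,1)))"

text \<open>Graded products in Lambda(T^*) (x) End(E) for End-valued 1-forms F (F v = value on the
  tangent vector v) and 0-forms X of parity p, with the Koszul sign
  (1 (x) X)(beta (x) A) = (-1)^(p*1) beta (x) XA,  (beta (x) A)(1 (x) X) = beta (x) AX.\<close>
definition lmul0 :: "nat \<Rightarrow> 'n::finite endo \<Rightarrow> ('v \<Rightarrow> 'n endo) \<Rightarrow> ('v \<Rightarrow> 'n endo)" where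
  "lmul0 p X F = (\<lambda>v. ((-1::real) ^ p) *\<^sub>R (X ** F v))"

definition rmul0 :: "('v \<Rightarrow> 'n::finite endo) \<Rightarrow> 'n endo \<Rightarrow> ('v \<Rightarrow> 'n endo)" where
  "rmul0 F X = (\<lambda>v. F v ** X)"

text \<open>Supercommutator [F,X] = F X - (-1)^(|F||X|) X F, where the End-valued 1-form F has
  values of parity pF (total parity 1+pF) and X has parity pX.\<close>
definition scomm10 :: "nat \<Rightarrow> nat \<Rightarrow> ('v \<Rightarrow> 'n::finite endo) \<Rightarrow> 'n endo \<Rightarrow> ('v \<Rightarrow> 'n endo)" where
  "scomm10 pF pX F X = (\<lambda>v. rmul0 F X v - ((-1::real) ^ ((1 + pF) * pX)) *\<^sub>R lmul0 pX X F v)"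

definition str_form :: "('n::finite \<Rightarrow> int) \<Rightarrow> ('v \<Rightarrow> 'n endo) \<Rightarrow> ('v \<Rightarrow> complex)" where
  "str_form N F = (\<lambda>v. str N (F v))"

text \<open>d delta: de Rham differential of the tautological function, d delta (v) = v.\<close>
definition d_taut :: "'n::finite endo \<Rightarrow> 'n endo \<Rightarrow> 'n endo" where
  "d_taut \<delta> = (\<lambda>v. v)"

definition kappa :: "('n::finite \<Rightarrow> int) \<Rightarrow> ('n endo \<Rightarrow> 'n endo) \<Rightarrow> 'n endo \<Rightarrow> 'n endo \<Rightarrow> complex" where
  "kappa N \<alpha> = (\<lambda>\<delta>. str_form N (lmul0 1 (\<alpha> \<delta>) (d_taut \<delta>)))"

definition homotopy_section :: "('n::finite \<Rightarrow> int) \<Rightarrow> ('n endo \<Rightarrow> 'n endo) \<Rightarrow> bool" where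
  "homotopy_section N \<alpha> = (Cinf_on_set (exact_diffs N) \<alpha> \<and>
     (\<forall>\<delta>\<in>exact_diffs N. hom_deg N 1 (\<alpha> \<delta>) \<and> \<alpha> \<delta> ** \<delta> + \<delta> ** \<alpha> \<delta> = mat 1))"

text \<open>Smooth sections of T^*D (x) End^0(E), represented by a smooth function f(delta,v),
  real-linear in v, with values in End^0(E).\<close>
definition form_section0 :: "('n::finite \<Rightarrow> int) \<Rightarrow> ('n endo \<Rightarrow> 'n endo \<Rightarrow> 'n endo) \<Rightarrow> bool" where
  "form_section0 N f = (Cinf_on_set (exact_diffs N \<times> UNIV) (\<lambda>(\<delta>, v). f \<delta> v) \<and>
     (\<forall>\<delta>\<in>exact_diffs N. linear (f \<delta>) \<and> (\<forall>v. hom_deg N 0 (f \<delta> v))))"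

end

theory Submission
  imports Defs
begin

text \<open>Since \<alpha> is a contracting homotopy for the acyclic differential \<delta>, an odd endomorphism C
  anticommuting with \<delta> is exact, C = \<delta>(\<alpha>C) - \<alpha>C\<delta>, so Tr_s[CY] = 0 whenever Y also
  anticommutes with \<delta>.  Differentiating \<delta>\<delta> = 0 shows that tangent vectors anticommute with \<delta>;
  with C = \<alpha> - \<alpha>' this gives the independence of \<kappa>, and Tr_s[\<alpha>[f,\<delta>]] = Tr_s[f] is the same
  computation.  For closedness, pull \<kappa> back along a smooth map \<phi> from the plane: the terms
  involving second derivatives of \<phi> cancel by the symmetry of second derivatives, and
  differentiating \<alpha>\<delta> + \<delta>\<alpha> = 1 shows Tr_s[\<alpha>'(X) Y] = -Tr_s[\<alpha>X\<alpha>Y], which is symmetric in X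
  and Y because \<alpha>X and \<alpha>Y are even.\<close>

abbreviation anticommutator :: "'n::finite endo \<Rightarrow> 'n endo \<Rightarrow> 'n endo" where
  "anticommutator X Y \<equiv> X ** Y + Y ** X"

lemma matrix_add_rdistrib: "(A + B) ** C = A ** C + B ** (C::'a::semiring_1^_^_)"
  by (simp add: matrix_matrix_mult_def vec_eq_iff sum.distrib algebra_simps)

lemma matrix_diff_ldistrib: "A ** (B - C) = A ** B - A ** (C::'a::ring_1^_^_)"
  by (simp add: matrix_matrix_mult_def vec_eq_iff sum_subtractf algebra_simps)

lemma matrix_diff_rdistrib: "(A - B) ** C = A ** C - B ** (C::'a::ring_1^_^_)"
  by (simp add: matrix_matrix_mult_def vec_eq_iff sum_subtractf algebra_simps)

lemma matrix_mul_lminus: "(- A) ** B = - (A ** (B::'a::ring_1^_^_))"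
  by (simp add: matrix_matrix_mult_def vec_eq_iff sum_negf)

lemma matrix_mul_rminus: "A ** (- B) = - (A ** (B::'a::ring_1^_^_))"
  by (simp add: matrix_matrix_mult_def vec_eq_iff sum_negf)

lemmas matrix_mult_simps = matrix_mul_assoc[symmetric] matrix_add_ldistrib matrix_add_rdistrib
  matrix_diff_ldistrib matrix_diff_rdistrib matrix_mul_lminus matrix_mul_rminus

lemma bounded_bilinear_matrix_mult: "bounded_bilinear ((**) :: 'n::finite endo \<Rightarrow> 'n endo \<Rightarrow> 'n endo)"
  unfolding bilinear_conv_bounded_bilinear[symmetric] bilinear_def
  by (auto intro!: linearI simp: matrix_add_ldistrib matrix_add_rdistrib matrix_scalar_ac scalar_matrix_assoc)

lemma hom_deg_matrix_mult:
  assumes "hom_deg N k A" "hom_deg N l B"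
  shows "hom_deg N (k + l) (A ** B)"
  unfolding hom_deg_def
proof (intro allI impI)
  fix i j assume "(A ** B) $ i $ j \<noteq> 0"
  then obtain m where "A $ i $ m * B $ m $ j \<noteq> 0"
    unfolding matrix_matrix_mult_def by (metis (no_types, lifting) sum.neutral vec_lambda_beta)
  then show "N i = N j + (k + l)"
    using assms unfolding hom_deg_def by (metis add.assoc add.commute mult_not_zero)
qed

lemma linear_str: "linear (str N :: 'n::finite endo \<Rightarrow> complex)"
  by (rule linearI) (simp_all add: str_def sum.distrib distrib_left scaleR_sum_right)

lemma bounded_linear_str: "bounded_linear (str N :: 'n::finite endo \<Rightarrow> complex)"
  using linear_str linear_conv_bounded_linear by blast

lemmas str_add = linear_add[OF linear_str]
lemmas str_diff = linear_diff[OF linear_str]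
lemmas str_minus = linear_neg[OF linear_str]

lemma str_mult_commute_graded:
  assumes "hom_deg N k X"
  shows "str N (X ** Y) = (if even k then 1 else -1) * str N (Y ** X)"
proof -
  define \<sigma> :: "_ \<Rightarrow> complex" where "\<sigma> i = (if even (N i) then 1 else -1)" for i
  have sign: "\<sigma> i * (X$i$j * Y$j$i) = (if even k then 1 else -1) * (\<sigma> j * (Y$j$i * X$i$j))" for i j
  proof (cases "X$i$j = 0")
    case False
    then have "N i = N j + k" using assms unfolding hom_deg_def by blast
    then show ?thesis by (auto simp: \<sigma>_def)
  qed simp
  have "str N (X ** Y) = (\<Sum>i\<in>UNIV. \<Sum>j\<in>UNIV. \<sigma> i * (X$i$j * Y$j$i))"
    by (simp add: str_def \<sigma>_def matrix_matrix_mult_def sum_distrib_left)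
  also have "\<dots> = (\<Sum>j\<in>UNIV. \<Sum>i\<in>UNIV. (if even k then 1 else -1) * (\<sigma> j * (Y$j$i * X$i$j)))"
    by (subst sum.swap) (simp only: sign)
  also have "\<dots> = (if even k then 1 else -1) * str N (Y ** X)"
    by (simp add: str_def \<sigma>_def matrix_matrix_mult_def sum_distrib_left)
  finally show ?thesis .
qed

lemma str_mult_anticommute_odd: "hom_deg N k X \<Longrightarrow> odd k \<Longrightarrow> str N (X ** Y) = - str N (Y ** X)"
  using str_mult_commute_graded by fastforce

lemma str_mult_commute_even: "hom_deg N k X \<Longrightarrow> even k \<Longrightarrow> str N (X ** Y) = str N (Y ** X)"
  using str_mult_commute_graded by fastforce

lemma str_mult_eq_0_if_anticommute:
  assumes ad: "anticommutator a d = mat 1" and d: "hom_deg N k d" "odd k"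
    and C: "anticommutator C d = 0" and Y: "anticommutator Y d = 0"
  shows "str N (C ** Y) = 0"
proof -
  have dC: "d ** C = - (C ** d)" using C by (simp add: add_eq_0_iff)
  have dY: "Y ** d = - (d ** Y)" using Y by (simp add: add_eq_0_iff)
  have "C ** Y = (a ** d + d ** a) ** (C ** Y)" using ad by simp
  also have "\<dots> = a ** ((d ** C) ** Y) + d ** (a ** C ** Y)" by (simp add: matrix_mult_simps)
  also have "\<dots> = - (a ** C ** d ** Y) + d ** (a ** C ** Y)" by (simp add: dC matrix_mult_simps)
  finally have CY: "C ** Y = - (a ** C ** d ** Y) + d ** (a ** C ** Y)" .
  have "str N (d ** (a ** C ** Y)) = - str N ((a ** C ** Y) ** d)"
    using str_mult_anticommute_odd[OF d] .
  also have "(a ** C ** Y) ** d = - (a ** C ** d ** Y)" by (simp add: dY matrix_mult_simps)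
  finally have "str N (d ** (a ** C ** Y)) = str N (a ** C ** d ** Y)" by (simp add: str_minus)
  then show ?thesis using CY by (simp add: str_diff)
qed

lemma str_homotopy_mult_commutator:
  assumes ad: "anticommutator a d = mat 1" and d: "hom_deg N k d" "odd k"
  shows "str N (a ** (d ** F)) - str N (a ** (F ** d)) = str N F"
proof -
  have "a ** (d ** F) = (a ** d + d ** a) ** F - d ** (a ** F)" by (simp add: matrix_mult_simps)
  then have "a ** (d ** F) = F - d ** (a ** F)" using ad by simp
  moreover have "str N (d ** (a ** F)) = - str N (a ** (F ** d))"
    using str_mult_anticommute_odd[OF d, of "a ** F"] by (simp only: matrix_mul_assoc)
  ultimately show ?thesis by (simp add: str_diff)
qed

lemma anticommutator_homotopy_conj:
  assumes ad: "anticommutator a d = mat 1" and X: "anticommutator X d = 0"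
  shows "anticommutator a X = anticommutator (a ** X ** a) d"
proof -
  have dX: "X ** d = - (d ** X)" using X by (simp add: add_eq_0_iff)
  have "a ** X = a ** X ** (a ** d + d ** a)" using ad by simp
  also have "\<dots> = a ** X ** a ** d + a ** (X ** d) ** a" by (simp add: matrix_mult_simps)
  also have "\<dots> = a ** X ** a ** d - a ** d ** X ** a" by (simp add: dX matrix_mult_simps)
  finally have "a ** X = a ** X ** a ** d - a ** d ** X ** a" .
  moreover have "X ** a = (a ** d + d ** a) ** X ** a" using ad by simp
  then have "X ** a = a ** d ** X ** a + d ** a ** X ** a" by (simp add: matrix_mult_simps)
  ultimately show ?thesis by (simp add: algebra_simps matrix_mul_assoc)
qed

lemma str_mult_homotopy_variation:
  assumes ad: "anticommutator a d = mat 1" and d: "hom_deg N k d" "odd k"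
    and X: "anticommutator X d = 0" and Y: "anticommutator Y d = 0"
    and A: "anticommutator A d + anticommutator a X = 0"
  shows "str N (A ** Y) = - str N (a ** X ** a ** Y)"
proof -
  have "anticommutator (A + a ** X ** a) d = anticommutator A d + anticommutator a X"
    by (simp add: anticommutator_homotopy_conj[OF ad X] matrix_add_rdistrib matrix_add_ldistrib)
  then have "str N ((A + a ** X ** a) ** Y) = 0"
    using str_mult_eq_0_if_anticommute[OF ad d _ Y] A by simp
  then show ?thesis by (simp add: matrix_add_rdistrib str_add eq_neg_iff_add_eq_0)
qed

lemma str_mult_homotopy_variation_symmetric:
  assumes ad: "anticommutator a d = mat 1" and d: "hom_deg N k d" "odd k"
    and a: "hom_deg N l a" and X: "hom_deg N m X" "even (l + m)"
    and XY: "anticommutator X d = 0" "anticommutator Y d = 0"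
    and A: "anticommutator A d + anticommutator a X = 0"
    and B: "anticommutator B d + anticommutator a Y = 0"
  shows "str N (A ** Y) = str N (B ** X)"
proof -
  have "str N ((a ** X) ** (a ** Y)) = str N ((a ** Y) ** (a ** X))"
    using str_mult_commute_even[OF hom_deg_matrix_mult[OF a X(1)] X(2)] .
  then show ?thesis
    using str_mult_homotopy_variation[OF ad d XY A] str_mult_homotopy_variation[OF ad d XY(2,1) B]
    by (simp add: matrix_mul_assoc)
qed

lemma second_difference_mean_value:
  fixes \<phi> :: "'a::real_normed_vector \<Rightarrow> 'b::real_normed_vector"
  assumes D: "\<And>y. y \<in> U \<Longrightarrow> (\<phi> has_derivative D y) (at y)"
    and U: "\<And>t. t \<in> {0..s} \<Longrightarrow> x + t *\<^sub>R u + w \<in> U \<and> x + t *\<^sub>R u \<in> U"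
    and bound: "\<And>t. t \<in> {0..s} \<Longrightarrow> norm (D (x + t *\<^sub>R u + w) u - D (x + t *\<^sub>R u) u - c) \<le> B"
    and s: "0 \<le> s"
  shows "norm (\<phi> (x + s *\<^sub>R u + w) - \<phi> (x + s *\<^sub>R u) - \<phi> (x + w) + \<phi> x - s *\<^sub>R c) \<le> B * s"
proof -
  define H where "H t = \<phi> (x + t *\<^sub>R u + w) - \<phi> (x + t *\<^sub>R u) - t *\<^sub>R c" for t
  define H' where "H' t = D (x + t *\<^sub>R u + w) u - D (x + t *\<^sub>R u) u - c" for t
  have "(H has_derivative (\<lambda>h. h *\<^sub>R H' t)) (at t within {0..s})" if t: "t \<in> {0..s}" for t
  proof -
    have "((\<lambda>t. \<phi> (x + t *\<^sub>R u + v)) has_derivative (\<lambda>h. h *\<^sub>R D (x + t *\<^sub>R u + v) u)) (at t within {0..s})"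
      if "x + t *\<^sub>R u + v \<in> U" for v
    proof -
      have "((\<lambda>t. x + t *\<^sub>R u + v) has_derivative (\<lambda>h. h *\<^sub>R u)) (at t within {0..s})"
        by (auto intro!: derivative_eq_intros)
      from has_derivative_compose[OF this D[OF that]] show ?thesis
        by (simp add: linear_cmul[OF has_derivative_linear[OF D[OF that]]])
    qed
    from this[of w] this[of 0] U[OF t] show ?thesis
      unfolding H_def H'_def by (auto intro!: derivative_eq_intros simp: scaleR_diff_right)
  qed
  moreover have "onorm (\<lambda>h::real. h *\<^sub>R H' t) \<le> B" if "t \<in> {0..s}" for t
    using bound[OF that] by (simp add: onorm_scaleR_left[OF bounded_linear_ident] onorm_id H'_def)
  ultimately have "norm (H s - H 0) \<le> B * norm (s - 0)"
    by (intro differentiable_bound[of "{0..s}"]) (use s in auto)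
  then show ?thesis using s by (simp add: H_def algebra_simps)
qed

lemma linearization_diff_le:
  assumes L: "linear L" and f: "\<And>z. norm z < d \<Longrightarrow> norm (f (x + z) - f x - L z) \<le> c * norm z"
    and "norm p < d" "norm q < d"
  shows "norm (f (x + p) - f (x + q) - L (p - q)) \<le> c * (norm p + norm q)"
proof -
  have "f (x + p) - f (x + q) - L (p - q) = (f (x + p) - f x - L p) - (f (x + q) - f x - L q)"
    by (simp add: linear_diff[OF L])
  also have "norm \<dots> \<le> c * norm p + c * norm q"
    using assms by (intro order.trans[OF norm_triangle_ineq4] add_mono f)
  finally show ?thesis by (simp add: distrib_left)
qed

lemma second_difference_approx:
  fixes \<phi> :: "'a::real_normed_vector \<Rightarrow> 'b::real_normed_vector"
  assumes U: "open U" "x \<in> U"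
    and D: "\<And>y. y \<in> U \<Longrightarrow> (\<phi> has_derivative D y) (at y)"
    and L: "((\<lambda>y. D y u) has_derivative L) (at x)"
    and e: "e > 0"
  shows "\<exists>s0>0. \<forall>s. 0 < s \<and> s < s0 \<longrightarrow>
     norm (\<phi> (x + s *\<^sub>R u + s *\<^sub>R w) - \<phi> (x + s *\<^sub>R u) - \<phi> (x + s *\<^sub>R w) + \<phi> x
           - (s * s) *\<^sub>R L w) \<le> e * s * s"
proof -
  define K where "K = 2 * norm u + norm w + 1"
  have K: "K > 0" unfolding K_def by (simp add: add_nonneg_pos)
  have linL: "linear L" using L by (rule has_derivative_linear)
  from L obtain d where d: "d > 0"
    and dL: "\<And>z. norm z < d \<Longrightarrow> norm (D (x + z) u - D x u - L z) \<le> e / K * norm z"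
    using e K unfolding has_derivative_at_alt by (metis add_diff_cancel_left' divide_pos_pos)
  from U obtain r where r: "r > 0" "ball x r \<subseteq> U" by (meson openE)
  show ?thesis
  proof (intro exI[of _ "min d r / K"] conjI allI impI)
    fix s :: real assume s: "0 < s \<and> s < min d r / K"
    then have sK: "s * K < min d r" using K by (simp add: pos_less_divide_eq)
    have sum_le: "norm (t *\<^sub>R u + s *\<^sub>R w) + norm (t *\<^sub>R u) \<le> s * K" if "t \<in> {0..s}" for t
    proof -
      have "norm (t *\<^sub>R u + s *\<^sub>R w) + norm (t *\<^sub>R u) \<le> (t * norm u + s * norm w) + t * norm u"
        using that s by (intro add_mono) (auto intro: order.trans[OF norm_triangle_ineq])
      also have "\<dots> \<le> s * K"
        using that s mult_right_mono[of t s "norm u"] by (simp add: K_def algebra_simps)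
      finally show ?thesis .
    qed
    have small: "norm (t *\<^sub>R u + s *\<^sub>R w) < min d r" "norm (t *\<^sub>R u) < min d r" if "t \<in> {0..s}" for t
      using sum_le[OF that] sK by (smt (verit) norm_ge_zero)+
    have "x + z \<in> U" if "norm z < r" for z
      using that r(2) by (auto simp: dist_norm)
    then have inU: "x + t *\<^sub>R u + s *\<^sub>R w \<in> U \<and> x + t *\<^sub>R u \<in> U" if "t \<in> {0..s}" for t
      using small[OF that] by (simp add: add.assoc)
    have "norm (D (x + t *\<^sub>R u + s *\<^sub>R w) u - D (x + t *\<^sub>R u) u - s *\<^sub>R L w) \<le> e * s"
      if t: "t \<in> {0..s}" for t
    proof -
      have "norm (D (x + (t *\<^sub>R u + s *\<^sub>R w)) u - D (x + t *\<^sub>R u) u - L ((t *\<^sub>R u + s *\<^sub>R w) - t *\<^sub>R u))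
          \<le> e / K * (norm (t *\<^sub>R u + s *\<^sub>R w) + norm (t *\<^sub>R u))"
        using small[OF t] by (intro linearization_diff_le[OF linL dL]) auto
      also have "\<dots> \<le> e / K * (s * K)"
        using e K by (intro mult_left_mono sum_le[OF t]) simp
      finally show ?thesis using K by (simp add: linear_cmul[OF linL] add.assoc)
    qed
    from second_difference_mean_value[OF D inU this] s
    show "norm (\<phi> (x + s *\<^sub>R u + s *\<^sub>R w) - \<phi> (x + s *\<^sub>R u) - \<phi> (x + s *\<^sub>R w) + \<phi> x
           - (s * s) *\<^sub>R L w) \<le> e * s * s" by simp
  qed (use d r K in simp)
qed

lemma second_derivative_symmetric:
  fixes \<phi> :: "'a::real_normed_vector \<Rightarrow> 'b::real_normed_vector"
  assumes U: "open U" "x \<in> U"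
    and D: "\<And>y. y \<in> U \<Longrightarrow> (\<phi> has_derivative D y) (at y)"
    and Lu: "((\<lambda>y. D y u) has_derivative Lu) (at x)"
    and Lw: "((\<lambda>y. D y w) has_derivative Lw) (at x)"
  shows "Lu w = Lw u"
proof (rule ccontr)
  assume ne: "Lu w \<noteq> Lw u"
  define e where "e = norm (Lu w - Lw u) / 4"
  have e: "e > 0" using ne by (simp add: e_def)
  define \<Delta> where "\<Delta> s = \<phi> (x + s *\<^sub>R u + s *\<^sub>R w) - \<phi> (x + s *\<^sub>R u) - \<phi> (x + s *\<^sub>R w) + \<phi> x" for s
  have \<Delta>_swap: "\<phi> (x + s *\<^sub>R w + s *\<^sub>R u) - \<phi> (x + s *\<^sub>R w) - \<phi> (x + s *\<^sub>R u) + \<phi> x = \<Delta> s" for s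
    by (simp add: \<Delta>_def add_ac)
  obtain s1 where "s1 > 0" and s1: "\<And>s. 0 < s \<Longrightarrow> s < s1 \<Longrightarrow> norm (\<Delta> s - (s * s) *\<^sub>R Lu w) \<le> e * s * s"
    using second_difference_approx[OF U D Lu e, of w] unfolding \<Delta>_def by blast
  obtain s2 where "s2 > 0" and s2: "\<And>s. 0 < s \<Longrightarrow> s < s2 \<Longrightarrow> norm (\<Delta> s - (s * s) *\<^sub>R Lw u) \<le> e * s * s"
    using second_difference_approx[OF U D Lw e, of u] unfolding \<Delta>_swap by blast
  define s where "s = min s1 s2 / 2"
  have s: "0 < s" "s < s1" "s < s2" using \<open>s1 > 0\<close> \<open>s2 > 0\<close> by (auto simp: s_def)
  have "(s * s) * norm (Lu w - Lw u) = norm ((\<Delta> s - (s * s) *\<^sub>R Lw u) - (\<Delta> s - (s * s) *\<^sub>R Lu w))"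
    using s by (simp add: algebra_simps flip: scaleR_diff_right)
  also have "\<dots> \<le> (s * s) * (2 * e)"
    using order.trans[OF norm_triangle_ineq4 add_mono[OF s2[OF s(1,3)] s1[OF s(1,2)]]]
    by (simp add: algebra_simps)
  finally have "norm (Lu w - Lw u) \<le> 2 * e" using s by simp
  then show False using e by (simp add: e_def)
qed

lemma has_derivative_eq_0_if_locally_constant:
  assumes "open U" "x \<in> U" "\<And>y. y \<in> U \<Longrightarrow> f y = c" "(f has_derivative f') (at x)"
  shows "f' h = 0"
proof -
  have "((\<lambda>y. c) has_derivative f') (at x)"
    by (rule has_derivative_transform_within_open[OF assms(4) assms(1,2)]) (use assms(3) in simp)
  then have "f' = (\<lambda>_. 0)" using has_derivative_unique has_derivative_const by blast
  then show ?thesis by simp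
qed

lemma hom_deg_has_derivative:
  fixes f :: "'a::real_normed_vector \<Rightarrow> 'n::finite endo"
  assumes "open U" "x \<in> U" "\<And>y. y \<in> U \<Longrightarrow> hom_deg N k (f y)" "(f has_derivative f') (at x)"
  shows "hom_deg N k (f' h)"
  unfolding hom_deg_def
proof (intro allI impI)
  fix i j assume ne: "f' h $ i $ j \<noteq> 0"
  have entry: "((\<lambda>y. f y $ i $ j) has_derivative (\<lambda>h. f' h $ i $ j)) (at x)"
    using bounded_linear.has_derivative[OF bounded_linear_vec_nth
        bounded_linear.has_derivative[OF bounded_linear_vec_nth assms(4)]] .
  show "N i = N j + k"
  proof (rule ccontr)
    assume "N i \<noteq> N j + k"
    then have "\<And>y. y \<in> U \<Longrightarrow> f y $ i $ j = 0" using assms(3) unfolding hom_deg_def by blast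
    then show False using has_derivative_eq_0_if_locally_constant[OF assms(1,2) _ entry] ne by blast
  qed
qed

lemma exact_diffs_has_derivative:
  assumes U: "open U" "x \<in> U" and \<phi>: "\<And>y. y \<in> U \<Longrightarrow> \<phi> y \<in> exact_diffs N"
    and D: "(\<phi> has_derivative D) (at x)"
  shows "hom_deg N (-1) (D h)" and "anticommutator (D h) (\<phi> x) = 0"
proof -
  show "hom_deg N (-1) (D h)"
    using hom_deg_has_derivative[OF U _ D] \<phi> by (simp add: exact_diffs_def)
  have "((\<lambda>y. \<phi> y ** \<phi> y) has_derivative (\<lambda>h. \<phi> x ** D h + D h ** \<phi> x)) (at x)"
    using bounded_bilinear.FDERIV[OF bounded_bilinear_matrix_mult D D] .
  moreover have "\<And>y. y \<in> U \<Longrightarrow> \<phi> y ** \<phi> y = 0" using \<phi> by (simp add: exact_diffs_def)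
  ultimately have "\<phi> x ** D h + D h ** \<phi> x = 0"
    by (intro has_derivative_eq_0_if_locally_constant[OF U])
  then show "anticommutator (D h) (\<phi> x) = 0" by (simp add: add.commute)
qed

lemma tangent_space_exact_diffs_anticommutator:
  fixes \<delta> :: "'n::finite endo"
  assumes "v \<in> tangent_space (exact_diffs N) \<delta>"
  shows "anticommutator v \<delta> = 0"
proof -
  obtain \<gamma> :: "real \<Rightarrow> 'n endo" where "\<And>t. \<gamma> t \<in> exact_diffs N" "\<gamma> 0 = \<delta>"
    "(\<gamma> has_derivative (\<lambda>t. t *\<^sub>R v)) (at 0)"
    using assms unfolding tangent_space_def by blast
  with exact_diffs_has_derivative(2)[of UNIV 0 \<gamma> N "\<lambda>t. t *\<^sub>R v" 1] show ?thesis by simp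
qed

lemma Ck_Suc_has_derivative:
  assumes "Ck (Suc k) U f" "open U" "x \<in> U"
  shows "(f has_derivative frechet_derivative f (at x)) (at x)"
  using assms by (simp add: differentiable_on_eq_differentiable_at frechet_derivative_works[symmetric])

lemma Cinf_on_set_comp_has_derivative:
  assumes g: "Cinf_on_set S g" and \<phi>: "continuous_on U \<phi>" "\<phi> ` U \<subseteq> S"
    and U: "open U" "x \<in> U" and D: "(\<phi> has_derivative D) (at x)"
  obtains G where "((\<lambda>y. g (\<phi> y)) has_derivative G) (at x)"
proof -
  obtain V h where V: "open V" "\<phi> x \<in> V" "Cinf_on V h" and hg: "\<And>y. y \<in> V \<inter> S \<Longrightarrow> h y = g y"
  proof -
    have "\<phi> x \<in> S" using \<phi>(2) U(2) by blast
    then show ?thesis using g that unfolding Cinf_on_set_def by blast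
  qed
  have h: "Ck (Suc 0) V h" using V(3) by (simp add: Cinf_on_def)
  have "((\<lambda>y. h (\<phi> y)) has_derivative (\<lambda>w. frechet_derivative h (at (\<phi> x)) (D w))) (at x)"
    using has_derivative_compose[OF D Ck_Suc_has_derivative[OF h V(1,2)]] .
  moreover have "open (U \<inter> \<phi> -` V)" "x \<in> U \<inter> \<phi> -` V"
    using continuous_open_preimage[OF \<phi>(1) U(1) V(1)] U(2) V(2) by (auto simp: Int_commute)
  moreover have "h (\<phi> y) = g (\<phi> y)" if "y \<in> U \<inter> \<phi> -` V" for y
    using that \<phi>(2) by (intro hg) auto
  ultimately have "((\<lambda>y. g (\<phi> y)) has_derivative (\<lambda>w. frechet_derivative h (at (\<phi> x)) (D w))) (at x)"
    by (rule has_derivative_transform_within_open)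
  then show ?thesis by (rule that)
qed

lemma homotopy_section_has_derivative:
  assumes \<alpha>: "homotopy_section N \<alpha>" and U: "open U" "x \<in> U"
    and \<phi>: "\<And>y. y \<in> U \<Longrightarrow> \<phi> y \<in> exact_diffs N" and D: "(\<phi> has_derivative D) (at x)"
    and A: "((\<lambda>y. \<alpha> (\<phi> y)) has_derivative A) (at x)"
  shows "anticommutator (A h) (\<phi> x) + anticommutator (\<alpha> (\<phi> x)) (D h) = 0"
proof -
  have "((\<lambda>y. \<alpha> (\<phi> y) ** \<phi> y + \<phi> y ** \<alpha> (\<phi> y)) has_derivative
      (\<lambda>h. (\<alpha> (\<phi> x) ** D h + A h ** \<phi> x) + (\<phi> x ** A h + D h ** \<alpha> (\<phi> x)))) (at x)"
    by (intro has_derivative_add bounded_bilinear.FDERIV[OF bounded_bilinear_matrix_mult] A D)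
  moreover have "\<And>y. y \<in> U \<Longrightarrow> \<alpha> (\<phi> y) ** \<phi> y + \<phi> y ** \<alpha> (\<phi> y) = mat 1"
    using \<phi> \<alpha> by (simp add: homotopy_section_def)
  ultimately have "(\<alpha> (\<phi> x) ** D h + A h ** \<phi> x) + (\<phi> x ** A h + D h ** \<alpha> (\<phi> x)) = 0"
    by (intro has_derivative_eq_0_if_locally_constant[OF U])
  then show ?thesis by (simp add: ac_simps)
qed

lemma kappa_apply: "kappa N \<alpha> \<delta> v = - str N (\<alpha> \<delta> ** v)"
  by (simp add: kappa_def str_form_def lmul0_def d_taut_def str_minus)

lemma kappa_independent:
  assumes "homotopy_section N \<alpha>" "homotopy_section N \<alpha>'" "\<delta> \<in> exact_diffs N"
    and v: "v \<in> tangent_space (exact_diffs N) \<delta>"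
  shows "kappa N \<alpha> \<delta> v = kappa N \<alpha>' \<delta> v"
proof -
  have ad: "anticommutator (\<alpha> \<delta>) \<delta> = mat 1" "anticommutator (\<alpha>' \<delta>) \<delta> = mat 1"
    and d: "hom_deg N (-1) \<delta>"
    using assms unfolding homotopy_section_def exact_diffs_def by auto
  have "anticommutator (\<alpha> \<delta> - \<alpha>' \<delta>) \<delta> = 0"
    using ad by (simp add: matrix_diff_ldistrib matrix_diff_rdistrib algebra_simps)
  with str_mult_eq_0_if_anticommute[OF ad(1) d _ _ tangent_space_exact_diffs_anticommutator[OF v]]
  have "str N ((\<alpha> \<delta> - \<alpha>' \<delta>) ** v) = 0" by simp
  then show ?thesis by (simp add: kappa_apply matrix_diff_rdistrib str_diff)
qed

lemma str_form_homotopy_supercommutator: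
  assumes "homotopy_section N \<alpha>" "\<delta> \<in> exact_diffs N"
  shows "str_form N (lmul0 1 (\<alpha> \<delta>) (scomm10 0 1 F \<delta>)) v = str_form N F v"
proof -
  have "anticommutator (\<alpha> \<delta>) \<delta> = mat 1" and "hom_deg N (-1) \<delta>"
    using assms unfolding homotopy_section_def exact_diffs_def by auto
  from str_homotopy_mult_commutator[OF this, of "F v"] show ?thesis
    by (simp add: str_form_def lmul0_def scomm10_def rmul0_def str_minus str_diff matrix_diff_ldistrib)
qed

lemma closed_1form_kappa:
  assumes \<alpha>: "homotopy_section N \<alpha>"
  shows "closed_1form (exact_diffs N) (kappa N \<alpha>)"
  unfolding closed_1form_def
proof (intro allI impI ballI)
  fix U :: "(real \<times> real) set" and \<phi> x
  assume "open U \<and> Cinf_on U \<phi> \<and> \<phi> ` U \<subseteq> exact_diffs N" and x: "x \<in> U"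
  then have U: "open U" and \<phi>: "\<phi> ` U \<subseteq> exact_diffs N" "\<And>y. y \<in> U \<Longrightarrow> \<phi> y \<in> exact_diffs N"
    and C2: "Ck (Suc (Suc 0)) U \<phi>"
    by (auto simp: Cinf_on_def)
  define D where "D y = frechet_derivative \<phi> (at y)" for y
  define G where "G v = frechet_derivative (\<lambda>y. D y v) (at x)" for v
  have D: "(\<phi> has_derivative D y) (at y)" if "y \<in> U" for y
    unfolding D_def by (rule Ck_Suc_has_derivative[OF C2 U that])
  have G: "((\<lambda>y. D y v) has_derivative G v) (at x)" for v
    using Ck_Suc_has_derivative[where k=0, OF _ U x] C2[unfolded Ck.simps(2)[of "Suc 0"]]
    unfolding G_def D_def by blast
  have continuous: "continuous_on U \<phi>"
    using C2 by (simp add: differentiable_imp_continuous_on)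
  obtain A where A: "((\<lambda>y. \<alpha> (\<phi> y)) has_derivative A) (at x)"
    using \<alpha> Cinf_on_set_comp_has_derivative[OF _ continuous \<phi>(1) U x D[OF x]]
    unfolding homotopy_section_def by blast
  have ad: "anticommutator (\<alpha> (\<phi> x)) (\<phi> x) = mat 1" "hom_deg N 1 (\<alpha> (\<phi> x))"
    using \<alpha> \<phi>(2)[OF x] unfolding homotopy_section_def by auto
  have d: "hom_deg N (-1) (\<phi> x)" using \<phi>(2)[OF x] by (simp add: exact_diffs_def)
  note Dx = exact_diffs_has_derivative[OF U x \<phi>(2) D[OF x]]
  note A_rel = homotopy_section_has_derivative[OF \<alpha> U x \<phi>(2) D[OF x] A]
  have deriv: "((\<lambda>y. kappa N \<alpha> (\<phi> y) (frechet_derivative \<phi> (at y) v)) has_derivative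
      (\<lambda>h. - str N (\<alpha> (\<phi> x) ** G v h + A h ** D x v))) (at x)" for v
    unfolding kappa_apply D_def[symmetric]
    by (intro has_derivative_minus bounded_linear.has_derivative[OF bounded_linear_str]
          bounded_bilinear.FDERIV[OF bounded_bilinear_matrix_mult] A G)
  have "G (0,1) (1,0) = G (1,0) (0,1)"
    by (rule second_derivative_symmetric[OF U x D G G])
  moreover have "str N (A (1,0) ** D x (0,1)) = str N (A (0,1) ** D x (1,0))"
    by (rule str_mult_homotopy_variation_symmetric[OF ad(1) d _ ad(2) Dx(1) _ Dx(2) Dx(2) A_rel A_rel]) simp_all
  ultimately have curl_free: "- str N (\<alpha> (\<phi> x) ** G (0,1) (1,0) + A (1,0) ** D x (0,1))
      = - str N (\<alpha> (\<phi> x) ** G (1,0) (0,1) + A (0,1) ** D x (1,0))"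
    by (simp add: str_add)
  show "\<exists>A B. ((\<lambda>y. kappa N \<alpha> (\<phi> y) (frechet_derivative \<phi> (at y) (1, 0))) has_derivative A) (at x) \<and>
             ((\<lambda>y. kappa N \<alpha> (\<phi> y) (frechet_derivative \<phi> (at y) (0, 1))) has_derivative B) (at x) \<and>
             B (1, 0) = A (0, 1)"
    using deriv[of "(1,0)"] deriv[of "(0,1)"] curl_free by blast
qed

theorem mainTheorem12:
  fixes N :: "'n::finite \<Rightarrow> int"
  assumes "exact_diffs N \<noteq> {}"
  shows "(\<forall>\<alpha> \<alpha>'. homotopy_section N \<alpha> \<and> homotopy_section N \<alpha>' \<longrightarrow>
            (\<forall>\<delta>\<in>exact_diffs N. \<forall>v\<in>tangent_space (exact_diffs N) \<delta>.
               kappa N \<alpha> \<delta> v = kappa N \<alpha>' \<delta> v))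
       \<and> (\<forall>\<alpha>. homotopy_section N \<alpha> \<longrightarrow> closed_1form (exact_diffs N) (kappa N \<alpha>))
       \<and> (\<forall>\<alpha> f. homotopy_section N \<alpha> \<and> form_section0 N f \<longrightarrow>
            (\<forall>\<delta>\<in>exact_diffs N. \<forall>v\<in>tangent_space (exact_diffs N) \<delta>.
               str_form N (lmul0 1 (\<alpha> \<delta>) (scomm10 0 1 (f \<delta>) \<delta>)) v = str_form N (f \<delta>) v))"
proof (intro conjI allI impI ballI)
  fix \<alpha> \<alpha>' \<delta> v
  assume "homotopy_section N \<alpha> \<and> homotopy_section N \<alpha>'" "\<delta> \<in> exact_diffs N"
    "v \<in> tangent_space (exact_diffs N) \<delta>"
  then show "kappa N \<alpha> \<delta> v = kappa N \<alpha>' \<delta> v"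
    using kappa_independent by blast
next
  fix \<alpha> :: "'n endo \<Rightarrow> 'n endo"
  assume "homotopy_section N \<alpha>"
  then show "closed_1form (exact_diffs N) (kappa N \<alpha>)" by (rule closed_1form_kappa)
next
  fix \<alpha> f \<delta> v
  assume "homotopy_section N \<alpha> \<and> form_section0 N f" "\<delta> \<in> exact_diffs N"
    "v \<in> tangent_space (exact_diffs N) \<delta>"
  \<comment> \<open>The identity holds for every End-valued 1-form.\<close>
  then show "str_form N (lmul0 1 (\<alpha> \<delta>) (scomm10 0 1 (f \<delta>) \<delta>)) v = str_form N (f \<delta>) v"
    by (intro str_form_homotopy_supercommutator) simp_all
qed

end
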